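(* There is no functional $M_o$ of type level $3$, computable (Kleene S1–S9) in some type $2$ functional, such that $\mathsf{WPR}(M_o)$ holds.
   Context: $C=2^{\mathbb N}$; for $f\in C$, $\overline{f}n=\langle f(0),\dots,f(n-1)\rangle$ and $[\sigma]$ is the set of $g\in C$ extending $\sigma$. For $F,G:C\to\mathbb N$, $\mathsf{LOC}(F,G)$ means $(\forall f,g\in C)\big(g\in[\overline{f}G(f)]\to F(g)\le G(f)\big)$. $\mathsf{WPR}(M_o)$ (weak Pincherle realiser) means $(\forall F^2,G^2)\big(\mathsf{LOC}(F,G)\to(\forall f\in C)(F(f)\le M_o(F,G))\big)$. *)

theory Defs
  imports Main "HOL-Library.Countable"
begin

type_synonym tp1 = "nat \<Rightarrow> nat"
type_synonym tp2 = "(nat \<Rightarrow> nat) \<Rightarrow> nat"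

definition cantor :: "tp1 \<Rightarrow> bool" where
  "cantor f \<longleftrightarrow> (\<forall>n. f n \<le> 1)"

definition LOC :: "tp2 \<Rightarrow> tp2 \<Rightarrow> bool" where
  "LOC F G \<longleftrightarrow> (\<forall>f g. cantor f \<and> cantor g \<and> (\<forall>i < G f. g i = f i) \<longrightarrow> F g \<le> G f)"

definition WPR :: "(tp2 \<Rightarrow> tp2 \<Rightarrow> nat) \<Rightarrow> bool" where
  "WPR M \<longleftrightarrow> (\<forall>F G. LOC F G \<longrightarrow> (\<forall>f. cantor f \<longrightarrow> F f \<le> M F G))"

text \<open>Kleene indices for schemes S1-S9, arguments split by type:
  a list of type-0, a list of type-1, a list of type-2 arguments.\<close>
datatype kidx =
    KS1
  | KS2 nat
  | KS3
  | KS4 kidx kidx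
  | KS5 kidx kidx
  | KS6 "nat list" "nat list" "nat list" kidx
  | KS7
  | KS8 kidx
  | KS9

instance kidx :: countable by countable_datatype

definition is_perm :: "nat list \<Rightarrow> nat \<Rightarrow> bool" where
  "is_perm p n \<longleftrightarrow> distinct p \<and> set p = {..<n}"

text \<open>kc e ns fs Fs m : "{e}(ns, fs, Fs) = m" (Kleene computation, S1-S9).
  Natural-number codes of indices (for S9) are given by from_nat.\<close>
inductive kc :: "kidx \<Rightarrow> nat list \<Rightarrow> tp1 list \<Rightarrow> tp2 list \<Rightarrow> nat \<Rightarrow> bool" where
  s1: "kc KS1 (x # ns) fs Fs (Suc x)"
| s2: "kc (KS2 q) ns fs Fs q"
| s3: "kc KS3 (x # ns) fs Fs x"
| s4: "kc e2 ns fs Fs m \<Longrightarrow> kc e1 (m # ns) fs Fs n \<Longrightarrow> kc (KS4 e1 e2) ns fs Fs n"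
| s5_0: "kc e1 ns fs Fs n \<Longrightarrow> kc (KS5 e1 e2) (0 # ns) fs Fs n"
| s5_S: "kc (KS5 e1 e2) (x # ns) fs Fs m \<Longrightarrow> kc e2 (m # x # ns) fs Fs n
          \<Longrightarrow> kc (KS5 e1 e2) (Suc x # ns) fs Fs n"
| s6: "is_perm p (length ns) \<Longrightarrow> is_perm q (length fs) \<Longrightarrow> is_perm r (length Fs)
       \<Longrightarrow> kc e (map (nth ns) p) (map (nth fs) q) (map (nth Fs) r) n
       \<Longrightarrow> kc (KS6 p q r e) ns fs Fs n"
| s7: "kc KS7 (x # ns) (\<alpha> # fs) Fs (\<alpha> x)"
| s8: "(\<forall>y. kc e (y # ns) fs (F # Fs) (g y)) \<Longrightarrow> kc (KS8 e) ns fs (F # Fs) (F g)"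
| s9: "kc (from_nat a) ns fs Fs n \<Longrightarrow> kc KS9 (a # ns) fs Fs n"

end

theory Submission
  imports Defs
begin

(* Suppose M were computed by the index e from Phi.  By Zorn's lemma there is a set D of
   type-1 functions with an injective coding c into the positive integers such that D
   contains every function computable from Phi, the zero functional and c, provided all
   type-2 queries of the computation stay inside D (a code records such a computation).
   Hence the computation of N = M (0, c) queries its functionals only inside D.  Diagonalising
   against the coding gives a binary h that differs from each f in D at position c f - 1, so
   h is not in D.  The functional F with value N + 1 at h and 0 elsewhere, together with
   G = c on D (and N + 1 off D), satisfies LOC F G; but F, G agree with 0, c on D, so the
   computation of M F G is that of M (0, c), and M F G = N < F h contradicts WPR M. *)

lemma kc_deterministic: "kc e ns fs Fs m \<Longrightarrow> kc e ns fs Fs m' \<Longrightarrow> m = m'"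
proof (induction arbitrary: m' rule: kc.induct)
  case (s4 e2 ns fs Fs m e1 n)
  from s4.prems show ?case by (cases rule: kc.cases) (auto dest: s4.IH)
next
  case (s5_0 e1 ns fs Fs n e2)
  from s5_0.prems show ?case by (cases rule: kc.cases) (auto dest: s5_0.IH)
next
  case (s5_S e1 e2 x ns fs Fs m n)
  from s5_S.prems show ?case by (cases rule: kc.cases) (auto dest: s5_S.IH)
next
  case (s6 p ns q fs r Fs e n)
  from s6.prems show ?case by (cases rule: kc.cases) (auto dest: s6.IH)
next
  case (s8 e ns fs F Fs g)
  from s8.prems obtain g' where g': "\<forall>y. kc e (y # ns) fs (F # Fs) (g' y)" and "m' = F g'"
    by (cases rule: kc.cases) auto
  have "g = g'" using s8.IH g' by (intro ext) blast
  with \<open>m' = F g'\<close> show ?case by simp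
next
  case (s9 a ns fs Fs n)
  from s9.prems show ?case by (cases rule: kc.cases) (auto dest: s9.IH)
qed (auto elim: kc.cases)

inductive kc_on :: "tp1 set \<Rightarrow> kidx \<Rightarrow> nat list \<Rightarrow> tp1 list \<Rightarrow> tp2 list \<Rightarrow> nat \<Rightarrow> bool"
  for D where
  s1: "kc_on D KS1 (x # ns) fs Fs (Suc x)"
| s2: "kc_on D (KS2 q) ns fs Fs q"
| s3: "kc_on D KS3 (x # ns) fs Fs x"
| s4: "kc_on D e2 ns fs Fs m \<Longrightarrow> kc_on D e1 (m # ns) fs Fs n \<Longrightarrow> kc_on D (KS4 e1 e2) ns fs Fs n"
| s5_0: "kc_on D e1 ns fs Fs n \<Longrightarrow> kc_on D (KS5 e1 e2) (0 # ns) fs Fs n"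
| s5_S: "kc_on D (KS5 e1 e2) (x # ns) fs Fs m \<Longrightarrow> kc_on D e2 (m # x # ns) fs Fs n
          \<Longrightarrow> kc_on D (KS5 e1 e2) (Suc x # ns) fs Fs n"
| s6: "is_perm p (length ns) \<Longrightarrow> is_perm q (length fs) \<Longrightarrow> is_perm r (length Fs)
       \<Longrightarrow> kc_on D e (map (nth ns) p) (map (nth fs) q) (map (nth Fs) r) n
       \<Longrightarrow> kc_on D (KS6 p q r e) ns fs Fs n"
| s7: "kc_on D KS7 (x # ns) (\<alpha> # fs) Fs (\<alpha> x)"
| s8: "g \<in> D \<Longrightarrow> (\<forall>y. kc_on D e (y # ns) fs (F # Fs) (g y))
       \<Longrightarrow> kc_on D (KS8 e) ns fs (F # Fs) (F g)"
| s9: "kc_on D (from_nat a) ns fs Fs n \<Longrightarrow> kc_on D KS9 (a # ns) fs Fs n"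

lemma kc_on_imp_kc: "kc_on D e ns fs Fs m \<Longrightarrow> kc e ns fs Fs m"
  by (induction rule: kc_on.induct) (auto intro: kc.intros)

lemma kc_on_mono: "kc_on D e ns fs Fs m \<Longrightarrow> D \<subseteq> D' \<Longrightarrow> kc_on D' e ns fs Fs m"
  by (induction rule: kc_on.induct) (auto intro: kc_on.intros)

definition agree_on :: "tp1 set \<Rightarrow> tp2 \<Rightarrow> tp2 \<Rightarrow> bool" where
  "agree_on D F F' \<longleftrightarrow> (\<forall>g\<in>D. F g = F' g)"

lemma list_all2_map_nth:
  "list_all2 P xs ys \<Longrightarrow> set ks \<subseteq> {..<length xs} \<Longrightarrow>
   list_all2 P (map (nth xs) ks) (map (nth ys) ks)"
  unfolding list_all2_conv_all_nth by (auto dest: nth_mem)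

lemma set_subset_imp_map_nth: "set xs \<subseteq> set ys \<Longrightarrow> \<exists>ks. xs = map (nth ys) ks"
proof (induction xs)
  case (Cons x xs)
  then obtain i ks where "i < length ys" "ys ! i = x" "xs = map (nth ys) ks"
    by (auto simp: in_set_conv_nth)
  then have "x # xs = map (nth ys) (i # ks)" by simp
  then show ?case by (rule exI)
qed simp

lemma kc_on_cong:
  "kc_on D e ns fs Fs m \<Longrightarrow> list_all2 (agree_on D) Fs Fs' \<Longrightarrow> kc_on D e ns fs Fs' m"
proof (induction arbitrary: Fs' rule: kc_on.induct)
  case (s6 p ns q fs r Fs e n)
  have "set r \<subseteq> {..<length Fs}" using \<open>is_perm r (length Fs)\<close> by (simp add: is_perm_def)
  then have "kc_on D e (map (nth ns) p) (map (nth fs) q) (map (nth Fs') r) n"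
    using s6.prems by (intro s6.IH list_all2_map_nth)
  then show ?case using s6.hyps s6.prems by (auto simp: list_all2_lengthD intro: kc_on.s6)
next
  case (s8 g e ns fs F Fs)
  then obtain F' Fs0 where Fs': "Fs' = F' # Fs0" and "agree_on D F F'"
    by (auto simp: list_all2_Cons1)
  have "\<forall>y. kc_on D e (y # ns) fs (F' # Fs0) (g y)" using s8.IH s8.prems Fs' by blast
  then have "kc_on D (KS8 e) ns fs (F' # Fs0) (F' g)" by (rule kc_on.s8[OF \<open>g \<in> D\<close>])
  moreover have "F' g = F g" using \<open>g \<in> D\<close> \<open>agree_on D F F'\<close> by (simp add: agree_on_def)
  ultimately show ?case using Fs' by (simp only:)
qed (auto intro: kc_on.intros)

definition kc_closed :: "tp1 set \<Rightarrow> tp2 list \<Rightarrow> bool" where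
  "kc_closed D Bs \<longleftrightarrow>
     (\<forall>e ns Fs g. set Fs \<subseteq> set Bs \<longrightarrow> (\<forall>y. kc_on D e (y # ns) [] Fs (g y)) \<longrightarrow> g \<in> D)"

lemma kc_closed_imp_kc_on:
  assumes "kc_closed D Bs"
  shows "kc e ns fs Fs m \<Longrightarrow> fs = [] \<Longrightarrow> set Fs \<subseteq> set Bs \<Longrightarrow> kc_on D e ns fs Fs m"
proof (induction rule: kc.induct)
  case (s4 e2 ns fs Fs m e1 n)
  from s4.IH(1)[OF s4.prems] s4.IH(2)[OF s4.prems] show ?case by (rule kc_on.s4)
next
  case (s5_0 e1 ns fs Fs n e2)
  from s5_0.IH[OF s5_0.prems] show ?case by (rule kc_on.s5_0)
next
  case (s5_S e1 e2 x ns fs Fs m n)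
  from s5_S.IH(1)[OF s5_S.prems] s5_S.IH(2)[OF s5_S.prems] show ?case by (rule kc_on.s5_S)
next
  case (s6 p ns q fs r Fs e n)
  have "map (nth fs) q = []" using \<open>is_perm q (length fs)\<close> \<open>fs = []\<close> by (simp add: is_perm_def)
  moreover have "set (map (nth Fs) r) \<subseteq> set Bs"
    using \<open>is_perm r (length Fs)\<close> \<open>set Fs \<subseteq> set Bs\<close> by (auto simp: is_perm_def)
  ultimately have "kc_on D e (map (nth ns) p) (map (nth fs) q) (map (nth Fs) r) n"
    by (rule s6.IH)
  with s6.hyps(1-3) show ?case by (rule kc_on.s6)
next
  case (s7 x ns \<alpha> fs Fs)
  then show ?case by simp
next
  case (s8 e ns fs F Fs g)
  then have comp: "\<forall>y. kc_on D e (y # ns) [] (F # Fs) (g y)" by simp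
  with assms \<open>set (F # Fs) \<subseteq> set Bs\<close> have "g \<in> D" unfolding kc_closed_def by blast
  from kc_on.s8[OF this comp] show ?case using \<open>fs = []\<close> by simp
next
  case (s9 a ns fs Fs n)
  from s9.IH[OF s9.prems] show ?case by (rule kc_on.s9)
qed (rule kc_on.intros)+

lemma kc_closed_agree:
  assumes "kc_closed D Bs" "kc e ns [] Bs m" "list_all2 (agree_on D) Bs Bs'"
  shows "kc e ns [] Bs' m"
  using kc_on_cong[OF kc_closed_imp_kc_on[OF assms(1,2) refl subset_refl] assms(3)]
  by (rule kc_on_imp_kc)

definition fun_of_rel :: "(tp1 \<times> nat) set \<Rightarrow> tp2" where
  "fun_of_rel R f = (THE n. (f, n) \<in> R)"

lemma fun_of_rel_eq: "single_valued R \<Longrightarrow> (f, n) \<in> R \<Longrightarrow> fun_of_rel R f = n"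
  unfolding fun_of_rel_def single_valued_def by (auto intro: the_equality)

lemma agree_on_fun_of_rel:
  assumes "single_valued R'" and "R \<subseteq> R'"
  shows "agree_on (Domain R) (fun_of_rel R) (fun_of_rel R')"
proof -
  have "single_valued R" using assms single_valued_subset by blast
  with assms show ?thesis unfolding agree_on_def by (auto simp: fun_of_rel_eq)
qed

lemma list_all2_agree_on_snoc:
  assumes "agree_on D a a'"
  shows "list_all2 (agree_on D) (map (nth (Bs @ [a])) r) (map (nth (Bs @ [a'])) r)"
proof -
  have "agree_on D ((Bs @ [a]) ! k) ((Bs @ [a']) ! k)" for k
    using assms by (cases "k - length Bs") (auto simp: nth_append agree_on_def)
  then show ?thesis by (simp add: list_all2_conv_all_nth)
qed

(* A code of f is Suc of a Goedel number of data (e, ns, r) computing f from Bs and the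
   functional coded by R itself, querying only the domain of R.  Codes are positive, and
   by determinism of kc they determine f. *)
definition is_code :: "tp2 list \<Rightarrow> (tp1 \<times> nat) set \<Rightarrow> tp1 \<Rightarrow> nat \<Rightarrow> bool" where
  "is_code Bs R f n \<longleftrightarrow> (\<exists>e ns r. n = Suc (to_nat (e, ns, r)) \<and>
     (\<forall>y. kc_on (Domain R) e (y # ns) [] (map (nth (Bs @ [fun_of_rel R])) r) (f y)))"

definition self_coding :: "tp2 list \<Rightarrow> (tp1 \<times> nat) set \<Rightarrow> bool" where
  "self_coding Bs R \<longleftrightarrow> single_valued R \<and> (\<forall>(f, n) \<in> R. is_code Bs R f n)"

lemma is_code_mono:
  assumes "single_valued R'" and "R \<subseteq> R'" and "is_code Bs R f n"
  shows "is_code Bs R' f n"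
proof -
  obtain e ns r where n: "n = Suc (to_nat (e, ns, r))"
    and comp: "\<And>y. kc_on (Domain R) e (y # ns) [] (map (nth (Bs @ [fun_of_rel R])) r) (f y)"
    using \<open>is_code Bs R f n\<close> unfolding is_code_def by blast
  have agree: "list_all2 (agree_on (Domain R))
      (map (nth (Bs @ [fun_of_rel R])) r) (map (nth (Bs @ [fun_of_rel R'])) r)"
    using agree_on_fun_of_rel[OF assms(1,2)] by (rule list_all2_agree_on_snoc)
  have "kc_on (Domain R') e (y # ns) [] (map (nth (Bs @ [fun_of_rel R'])) r) (f y)" for y
    using kc_on_cong[OF comp agree] Domain_mono[OF \<open>R \<subseteq> R'\<close>] by (rule kc_on_mono)
  with n show ?thesis unfolding is_code_def by blast
qed

lemma self_coding_chain_Union: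
  assumes C: "C \<in> chains {R. self_coding Bs R}"
  shows "self_coding Bs (\<Union>C)"
proof -
  have sv: "single_valued (\<Union>C)"
  proof (rule single_valuedI)
    fix x y z assume "(x, y) \<in> \<Union>C" "(x, z) \<in> \<Union>C"
    then obtain R1 R2 where "R1 \<in> C" "R2 \<in> C" "(x, y) \<in> R1" "(x, z) \<in> R2" by blast
    moreover from this have "R1 \<subseteq> R2 \<or> R2 \<subseteq> R1" using chainsD[OF C] by blast
    moreover have "single_valued R1" "single_valued R2"
      using chainsD2[OF C] \<open>R1 \<in> C\<close> \<open>R2 \<in> C\<close> by (auto simp: self_coding_def)
    ultimately show "y = z" unfolding single_valued_def by blast
  qed
  have "is_code Bs (\<Union>C) f n" if fn: "(f, n) \<in> \<Union>C" for f n
  proof -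
    obtain R where "R \<in> C" "(f, n) \<in> R" using fn by blast
    then have "is_code Bs R f n" using chainsD2[OF C] by (auto simp: self_coding_def)
    moreover have "R \<subseteq> \<Union>C" using \<open>R \<in> C\<close> by blast
    ultimately show ?thesis using is_code_mono[OF sv] by blast
  qed
  with sv show ?thesis unfolding self_coding_def by blast
qed

(* Any new function computable relative to Domain R could be added to R with a fresh code,
   so maximality forces it into Domain R already. *)
lemma maximal_self_coding_closed:
  assumes R: "self_coding Bs R" and max: "\<And>R'. self_coding Bs R' \<Longrightarrow> R \<subseteq> R' \<Longrightarrow> R' = R"
  shows "kc_closed (Domain R) (Bs @ [fun_of_rel R])"
  unfolding kc_closed_def
proof (intro allI impI)
  fix e ns Fs g
  assume "set Fs \<subseteq> set (Bs @ [fun_of_rel R])"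
    and comp: "\<forall>y. kc_on (Domain R) e (y # ns) [] Fs (g y)"
  then obtain r where Fs: "Fs = map (nth (Bs @ [fun_of_rel R])) r"
    using set_subset_imp_map_nth by blast
  show "g \<in> Domain R"
  proof (rule ccontr)
    assume g: "g \<notin> Domain R"
    define R' where "R' = insert (g, Suc (to_nat (e, ns, r))) R"
    have "R \<subseteq> R'" by (auto simp: R'_def)
    have sv: "single_valued R'"
      using R g unfolding R'_def self_coding_def single_valued_def by auto
    have "is_code Bs R g (Suc (to_nat (e, ns, r)))"
      using comp Fs unfolding is_code_def by blast
    then have "is_code Bs R' f n" if "(f, n) \<in> R'" for f n
      using that R is_code_mono[OF sv \<open>R \<subseteq> R'\<close>] unfolding R'_def self_coding_def by auto
    with sv have "self_coding Bs R'" unfolding self_coding_def by blast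
    with max \<open>R \<subseteq> R'\<close> have "R' = R" by blast
    with g show False by (auto simp: R'_def)
  qed
qed

lemma self_coding_inj_on:
  assumes "self_coding Bs R"
  shows "inj_on (fun_of_rel R) (Domain R)"
proof (rule inj_onI)
  fix f f' assume "f \<in> Domain R" "f' \<in> Domain R" and eq: "fun_of_rel R f = fun_of_rel R f'"
  have sv: "single_valued R" using assms by (simp add: self_coding_def)
  from \<open>f \<in> Domain R\<close> \<open>f' \<in> Domain R\<close> obtain n n' where "(f, n) \<in> R" "(f', n') \<in> R"
    by blast
  moreover from this have "n' = n" using eq by (simp add: fun_of_rel_eq[OF sv])
  ultimately have "is_code Bs R f n" "is_code Bs R f' n"
    using assms unfolding self_coding_def by auto
  then obtain e ns r where
    cf: "\<forall>y. kc_on (Domain R) e (y # ns) [] (map (nth (Bs @ [fun_of_rel R])) r) (f y)" and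
    cf': "\<forall>y. kc_on (Domain R) e (y # ns) [] (map (nth (Bs @ [fun_of_rel R])) r) (f' y)"
    unfolding is_code_def by auto
  show "f = f'"
    by (rule ext, rule kc_deterministic[OF kc_on_imp_kc kc_on_imp_kc, OF cf[rule_format] cf'[rule_format]])
qed

lemma self_coding_pos: "self_coding Bs R \<Longrightarrow> f \<in> Domain R \<Longrightarrow> 0 < fun_of_rel R f"
  unfolding self_coding_def is_code_def by (auto simp: fun_of_rel_eq)

lemma closed_coded_domain_exists: "\<exists>D c. inj_on c D \<and> (\<forall>f\<in>D. 0 < c f) \<and> kc_closed D (Bs @ [c])"
proof -
  have "\<forall>C\<in>chains {R. self_coding Bs R}. \<Union>C \<in> {R. self_coding Bs R}"
    using self_coding_chain_Union by blast
  then obtain R where R: "self_coding Bs R" and "\<forall>R'\<in>{R. self_coding Bs R}. R \<subseteq> R' \<longrightarrow> R' = R"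
    by (blast dest: Zorn_Lemma)
  then have "kc_closed (Domain R) (Bs @ [fun_of_rel R])"
    by (intro maximal_self_coding_closed) auto
  with self_coding_inj_on[OF R] self_coding_pos[OF R] show ?thesis by blast
qed

lemma cantor_diagonal:
  assumes "inj_on c D"
  shows "\<exists>h. cantor h \<and> (\<forall>f\<in>D. h (c f) \<noteq> f (c f))"
proof (intro exI conjI)
  let ?h = "\<lambda>k. 1 - inv_into D c k k"
  show "cantor ?h" by (simp add: cantor_def)
  show "\<forall>f\<in>D. ?h (c f) \<noteq> f (c f)" using assms by (auto; arith)
qed

lemma LOC_spike:
  assumes "\<forall>f\<in>D. 0 < G f \<and> h (G f - 1) \<noteq> f (G f - 1)" and "\<forall>f. f \<notin> D \<longrightarrow> b \<le> G f"
  shows "LOC (\<lambda>g. if g = h then b else 0) G"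
  unfolding LOC_def
proof (intro allI impI, elim conjE)
  fix f g assume agree: "\<forall>i < G f. g i = f i"
  show "(if g = h then b else 0) \<le> G f"
  proof (cases "f \<in> D")
    case True
    with assms(1) have "G f - 1 < G f" and "h (G f - 1) \<noteq> f (G f - 1)" by auto
    with agree have "g \<noteq> h" by auto
    then show ?thesis by simp
  qed (use assms(2) in simp)
qed

theorem theorem3p14:
  shows "\<not> (\<exists>(M :: tp2 \<Rightarrow> tp2 \<Rightarrow> nat) (\<Phi> :: tp2) (e :: kidx).
            (\<forall>F G. kc e [] [] [\<Phi>, F, G] (M F G)) \<and> WPR M)"
proof
  assume "\<exists>(M :: tp2 \<Rightarrow> tp2 \<Rightarrow> nat) (\<Phi> :: tp2) (e :: kidx).
            (\<forall>F G. kc e [] [] [\<Phi>, F, G] (M F G)) \<and> WPR M"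
  then obtain M \<Phi> e where comp: "\<And>F G. kc e [] [] [\<Phi>, F, G] (M F G)" and "WPR M" by blast
  obtain D c where "inj_on c D" and pos: "\<forall>f\<in>D. 0 < c f" and closed: "kc_closed D [\<Phi>, \<lambda>_. 0, c]"
    using closed_coded_domain_exists[of "[\<Phi>, \<lambda>_. 0]"] by auto
  then have "inj_on (\<lambda>f. c f - 1) D" unfolding inj_on_def by (metis Suc_pred')
  then obtain h where "cantor h" and h: "\<forall>f\<in>D. h (c f - 1) \<noteq> f (c f - 1)"
    using cantor_diagonal by blast
  define N where "N = M (\<lambda>_. 0) c"
  define F where "F = (\<lambda>g. if g = h then Suc N else 0)"
  define G where "G = (\<lambda>f. if f \<in> D then c f else Suc N)"
  have "h \<notin> D" using h by blast
  then have "list_all2 (agree_on D) [\<Phi>, \<lambda>_. 0, c] [\<Phi>, F, G]"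
    by (auto simp: agree_on_def F_def G_def)
  then have "kc e [] [] [\<Phi>, F, G] N" unfolding N_def by (rule kc_closed_agree[OF closed comp])
  then have "M F G = N" by (rule kc_deterministic[OF comp])
  have "LOC F G" unfolding F_def by (rule LOC_spike) (use pos h in \<open>auto simp: G_def\<close>)
  then have "F h \<le> M F G" using \<open>WPR M\<close> \<open>cantor h\<close> unfolding WPR_def by blast
  with \<open>M F G = N\<close> show False by (simp add: F_def)
qed

end
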